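(* Let $n\ge1$. Let $F:\mathbb{R}\times(\mathbb{R}^n\setminus\{0\})\to[0,\infty)$ satisfy $F(t,x)=F(-t,x)=F(-t,-x)$ and be convex in $t$: $F(\lambda t+(1-\lambda)\tau,x)\le\lambda F(t,x)+(1-\lambda)F(\tau,x)$ for all $\lambda\in(0,1)$, $t,\tau\in\mathbb{R}$ and a.e. $x$. Let $W:\mathbb{R}\to[0,\infty)$ with $W\in L^\infty(\mathbb{R})\cap C^1(\mathbb{R})$. Let $\Omega\subset\mathbb{R}^n$ be measurable and $u,v:\mathbb{R}^n\to\mathbb{R}$ measurable, and set $m=\min\{u,v\}$, $M=\max\{u,v\}$. Then $$\mathcal{E}(m,\Omega)+\mathcal{E}(M,\Omega)\le\mathcal{E}(u,\Omega)+\mathcal{E}(v,\Omega).$$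
   Context: For a measurable set $\Omega\subset\mathbb{R}^n$ with complement $\mathcal{C}\Omega=\mathbb{R}^n\setminus\Omega$ and measurable $w:\mathbb{R}^n\to\mathbb{R}$, $\mathcal{E}(w,\Omega)=\iint_{\mathbb{R}^{2n}\setminus(\mathcal{C}\Omega)^2}F(w(x)-w(y),x-y)\,dx\,dy+\int_\Omega W(w)\,dx\in[0,\infty]$. *)

theory Defs
  imports "HOL-Analysis.Analysis"
begin

text \<open>Nonlocal energy E(w,Omega) on R^n, modelled by a Euclidean space 'a
  (dimension DIM('a) >= 1).\<close>

definition energy ::
  "(real \<Rightarrow> 'a::euclidean_space \<Rightarrow> real) \<Rightarrow> (real \<Rightarrow> real) \<Rightarrow> ('a \<Rightarrow> real) \<Rightarrow> 'a set \<Rightarrow> ennreal"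
where
  "energy F W w \<Omega> =
     (\<integral>\<^sup>+ p. indicator (UNIV - ((UNIV - \<Omega>) \<times> (UNIV - \<Omega>))) p
              * ennreal (F (w (fst p) - w (snd p)) (fst p - snd p)) \<partial>lebesgue)
   + (\<integral>\<^sup>+ x. indicator \<Omega> x * ennreal (W (w x)) \<partial>lebesgue)"

end

theory Submission
  imports Defs
begin

text \<open>At every pair of points \<open>(x, y)\<close> the increments of \<open>min u v\<close> and \<open>max u v\<close> lie
  between the increments \<open>u x - u y\<close> and \<open>v x - v y\<close> and have the same sum, so convexity of
  \<open>t \<mapsto> F t (x - y)\<close> makes their \<open>F\<close>-values sum to at most those of \<open>u\<close> and \<open>v\<close>. The potential term
  is unchanged since \<open>{min u v, max u v} = {u, v}\<close> pointwise. Integrating gives the claim; the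
  only measure-theoretic input is that \<open>{(x, y). x - y \<in> Z}\<close> is null for null \<open>Z\<close>, so the
  a.e. convexity of \<open>F\<close> in its first argument is inherited by almost every pair.\<close>

lemma measurable_completion_null_vimage:
  assumes f: "f \<in> M \<rightarrow>\<^sub>M N"
    and null_vimage: "\<And>Z. Z \<in> null_sets N \<Longrightarrow> f -` Z \<inter> space M \<in> null_sets M"
  shows "f \<in> completion M \<rightarrow>\<^sub>M completion N"
proof (rule measurableI)
  fix A assume "A \<in> sets (completion N)"
  then obtain S Z Z' where A: "A = S \<union> Z" "Z \<subseteq> Z'" "Z' \<in> null_sets N" "S \<in> sets N"
    by (rule sets_completionE)
  have split: "f -` A \<inter> space (completion M) = (f -` S \<inter> space M) \<union> (f -` Z \<inter> space M)"
    using A(1) by auto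
  have "f -` Z \<inter> space M \<subseteq> f -` Z' \<inter> space M"
    using A(2) by auto
  from sets_completionI[OF split this null_vimage[OF A(3)] measurable_sets[OF f A(4)]]
  show "f -` A \<inter> space (completion M) \<in> sets (completion M)" .
next
  show "x \<in> space (completion M) \<Longrightarrow> f x \<in> space (completion N)" for x
    using measurable_space[OF f] by simp
qed

lemma measurable_fst_lebesgue:
  "fst \<in> (lebesgue :: ('a::euclidean_space \<times> 'b::euclidean_space) measure) \<rightarrow>\<^sub>M lebesgue"
proof (rule measurable_completion_null_vimage)
  fix Z :: "'a set" assume "Z \<in> null_sets lborel"
  then have "Z \<times> (UNIV :: 'b set) \<in> null_sets (lborel \<Otimes>\<^sub>M lborel)"
    by (intro lborel.times_in_null_sets1) auto
  moreover have "fst -` Z \<inter> space lborel = Z \<times> (UNIV :: 'b set)" by auto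
  ultimately show "fst -` Z \<inter> space lborel \<in> null_sets (lborel :: ('a \<times> 'b) measure)"
    by (simp add: lborel_prod)
qed (simp add: borel_measurable_continuous_onI continuous_on_fst)

lemma measurable_snd_lebesgue:
  "snd \<in> (lebesgue :: ('a::euclidean_space \<times> 'b::euclidean_space) measure) \<rightarrow>\<^sub>M lebesgue"
proof (rule measurable_completion_null_vimage)
  fix Z :: "'b set" assume "Z \<in> null_sets lborel"
  then have "(UNIV :: 'a set) \<times> Z \<in> null_sets (lborel \<Otimes>\<^sub>M lborel)"
    by (intro lborel.times_in_null_sets2) auto
  moreover have "snd -` Z \<inter> space lborel = (UNIV :: 'a set) \<times> Z" by auto
  ultimately show "snd -` Z \<inter> space lborel \<in> null_sets (lborel :: ('a \<times> 'b) measure)"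
    by (simp add: lborel_prod)
qed (simp add: borel_measurable_continuous_onI continuous_on_snd)

lemma null_sets_lebesgue_diff_vimage:
  assumes "Z \<in> null_sets (lebesgue :: 'a::euclidean_space measure)"
  shows "{p :: 'a \<times> 'a. fst p - snd p \<in> Z} \<in> null_sets lebesgue"
proof -
  obtain Z' where Z': "Z' \<in> null_sets (lborel :: 'a measure)" "Z \<subseteq> Z'"
    using assms unfolding null_sets_completion_iff2 by auto
  define S where "S = {p :: 'a \<times> 'a. fst p - snd p \<in> Z'}"
  have "(\<lambda>p :: 'a \<times> 'a. fst p - snd p) \<in> borel_measurable borel"
    by (intro borel_measurable_continuous_onI continuous_intros)
  from measurable_sets[OF this, of Z'] Z'(1) have S_borel: "S \<in> sets borel"
    by (simp add: S_def vimage_def null_sets_def)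
  then have S_sets: "S \<in> sets (lborel \<Otimes>\<^sub>M lborel)"
    unfolding lborel_prod by simp
  have slice_null: "emeasure lborel ((\<lambda>x. (x, y)) -` S) = 0" for y :: 'a
  proof -
    have "(\<lambda>x. (x, y)) -` S = (+) (- y) -` Z' \<inter> space lborel"
      by (auto simp: S_def)
    then have "emeasure lborel ((\<lambda>x. (x, y)) -` S) = emeasure (distr lborel borel ((+) (- y))) Z'"
      using Z'(1) by (subst emeasure_distr) auto
    then show ?thesis
      using Z'(1) by (simp add: lborel_distr_plus null_sets_def)
  qed
  have "emeasure (lborel \<Otimes>\<^sub>M lborel) S = 0"
    by (simp add: lborel_pair.emeasure_pair_measure_alt2[OF S_sets] slice_null)
  with S_borel have "S \<in> null_sets (lborel :: ('a \<times> 'a) measure)"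
    by (simp add: lborel_prod null_sets_def)
  moreover have "{p. fst p - snd p \<in> Z} \<subseteq> S"
    using Z'(2) by (auto simp: S_def)
  ultimately show ?thesis
    unfolding null_sets_completion_iff2 by blast
qed

lemma convex_on_UNIV_realI:
  fixes f :: "real \<Rightarrow> real"
  assumes "\<forall>l\<in>{0<..<1}. \<forall>t \<tau>. f (l * t + (1 - l) * \<tau>) \<le> l * f t + (1 - l) * f \<tau>"
  shows "convex_on UNIV f"
proof (rule convex_onI)
  fix l t \<tau> :: real assume "0 < l" "l < 1"
  with assms[rule_format, of "1 - l" t \<tau>]
  show "f ((1 - l) *\<^sub>R t + l *\<^sub>R \<tau>) \<le> (1 - l) * f t + l * f \<tau>"
    by simp
qed simp

lemma convex_on_sum_le_sum_extremes:
  fixes f :: "real \<Rightarrow> real"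
  assumes f: "convex_on UNIV f" and "min a b \<le> c" "c \<le> max a b"
  shows "f c + f (a + b - c) \<le> f a + f b"
proof -
  have ordered: "f c + f (a + b - c) \<le> f a + f b" if "a \<le> c" "c \<le> b" for a b
  proof (cases "a = b")
    case True
    with that show ?thesis by simp
  next
    case False
    define t where "t = (c - a) / (b - a)"
    have t: "0 \<le> t" "t \<le> 1"
      using that False by (auto simp: t_def field_simps)
    have "t * (b - a) = c - a"
      using False by (simp add: t_def)
    then have c: "c = (1 - t) *\<^sub>R a + t *\<^sub>R b"
      by (simp add: algebra_simps)
    have c': "a + b - c = (1 - (1 - t)) *\<^sub>R a + (1 - t) *\<^sub>R b"
      by (simp add: c algebra_simps)
    have "f c \<le> (1 - t) * f a + t * f b"
      using convex_onD[OF f t] c by simp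
    moreover have "f (a + b - c) \<le> (1 - (1 - t)) * f a + (1 - t) * f b"
      using convex_onD[OF f, of "1 - t"] t c' by simp
    ultimately show ?thesis by (simp add: algebra_simps)
  qed
  show ?thesis
  proof (cases "a \<le> b")
    case True
    with assms(2,3) show ?thesis by (intro ordered) auto
  next
    case False
    with assms(2,3) ordered[of b a] show ?thesis by (simp add: ac_simps)
  qed
qed

lemma convex_on_min_max_diff_le:
  fixes f :: "real \<Rightarrow> real"
  assumes "convex_on UNIV f"
  shows "f (min a b - min c d) + f (max a b - max c d) \<le> f (a - c) + f (b - d)"
proof -
  have between: "min (a - c) (b - d) \<le> min a b - min c d" "min a b - min c d \<le> max (a - c) (b - d)"
    by (auto simp: min_def max_def)
  have "max a b - max c d = (a - c) + (b - d) - (min a b - min c d)"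
    by (simp add: min_def max_def)
  then show ?thesis
    using convex_on_sum_le_sum_extremes[OF assms between] by simp
qed

lemma nn_integral_add_mono_AE:
  assumes "f1 \<in> borel_measurable M" "f2 \<in> borel_measurable M"
    and "g1 \<in> borel_measurable M" "g2 \<in> borel_measurable M"
    and "AE x in M. f1 x + f2 x \<le> g1 x + g2 x"
  shows "integral\<^sup>N M f1 + integral\<^sup>N M f2 \<le> integral\<^sup>N M g1 + integral\<^sup>N M g2"
  using nn_integral_mono_AE[OF assms(5)] by (simp add: nn_integral_add assms(1-4))

definition interaction_energy ::
  "(real \<Rightarrow> 'a::euclidean_space \<Rightarrow> real) \<Rightarrow> ('a \<Rightarrow> real) \<Rightarrow> 'a set \<Rightarrow> ennreal"
where
  "interaction_energy F w \<Omega> =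
     (\<integral>\<^sup>+ p. indicator (UNIV - ((UNIV - \<Omega>) \<times> (UNIV - \<Omega>))) p
              * ennreal (F (w (fst p) - w (snd p)) (fst p - snd p)) \<partial>lebesgue)"

definition potential_energy :: "(real \<Rightarrow> real) \<Rightarrow> ('a::euclidean_space \<Rightarrow> real) \<Rightarrow> 'a set \<Rightarrow> ennreal"
  where "potential_energy W w \<Omega> = (\<integral>\<^sup>+ x. indicator \<Omega> x * ennreal (W (w x)) \<partial>lebesgue)"

lemma energy_eq_interaction_plus_potential:
  "energy F W w \<Omega> = interaction_energy F w \<Omega> + potential_energy W w \<Omega>"
  by (simp add: energy_def interaction_energy_def potential_energy_def)

lemma interaction_integrand_measurable:
  fixes F :: "real \<Rightarrow> 'a::euclidean_space \<Rightarrow> real"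
  assumes F: "(\<lambda>(t, x). F t x) \<in> borel_measurable borel"
    and \<Omega>: "\<Omega> \<in> sets lebesgue" and w: "w \<in> borel_measurable lebesgue"
  shows "(\<lambda>p. indicator (UNIV - ((UNIV - \<Omega>) \<times> (UNIV - \<Omega>))) p
              * ennreal (F (w (fst p) - w (snd p)) (fst p - snd p))) \<in> borel_measurable lebesgue"
proof -
  have "UNIV - ((UNIV - \<Omega>) \<times> (UNIV - \<Omega>)) = (fst -` \<Omega> \<inter> space lebesgue) \<union> (snd -` \<Omega> \<inter> space lebesgue)"
    by auto
  then have D: "UNIV - ((UNIV - \<Omega>) \<times> (UNIV - \<Omega>)) \<in> sets (lebesgue :: ('a \<times> 'a) measure)"
    using measurable_sets[OF measurable_fst_lebesgue \<Omega>] measurable_sets[OF measurable_snd_lebesgue \<Omega>]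
    by auto
  have "(\<lambda>p :: 'a \<times> 'a. w (fst p) - w (snd p)) \<in> borel_measurable lebesgue"
    using measurable_compose[OF measurable_fst_lebesgue w] measurable_compose[OF measurable_snd_lebesgue w]
    by (rule borel_measurable_diff)
  moreover have "(\<lambda>p :: 'a \<times> 'a. fst p - snd p) \<in> borel_measurable lebesgue"
    by (rule measurable_completion[of _ lborel])
      (simp, intro borel_measurable_continuous_onI continuous_intros)
  ultimately have "(\<lambda>p :: 'a \<times> 'a. (w (fst p) - w (snd p), fst p - snd p)) \<in> borel_measurable lebesgue"
    by (rule borel_measurable_Pair)
  from measurable_compose[OF this F]
  have "(\<lambda>p :: 'a \<times> 'a. F (w (fst p) - w (snd p)) (fst p - snd p)) \<in> borel_measurable lebesgue"
    by simp
  with D show ?thesis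
    by measurable
qed

lemma interaction_energy_min_max_le:
  fixes F :: "real \<Rightarrow> 'a::euclidean_space \<Rightarrow> real"
  assumes F_meas: "(\<lambda>(t, x). F t x) \<in> borel_measurable borel"
    and F_nonneg: "\<And>t x. x \<noteq> 0 \<Longrightarrow> F t x \<ge> 0"
    and F_convex: "AE x in lebesgue. convex_on UNIV (\<lambda>t. F t x)"
    and \<Omega>: "\<Omega> \<in> sets lebesgue"
    and u: "u \<in> borel_measurable lebesgue" and v: "v \<in> borel_measurable lebesgue"
  shows "interaction_energy F (\<lambda>x. min (u x) (v x)) \<Omega> + interaction_energy F (\<lambda>x. max (u x) (v x)) \<Omega>
         \<le> interaction_energy F u \<Omega> + interaction_energy F v \<Omega>"
proof -
  define I where "I w p = indicator (UNIV - ((UNIV - \<Omega>) \<times> (UNIV - \<Omega>))) p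
      * ennreal (F (w (fst p) - w (snd p)) (fst p - snd p))" for w and p :: "'a \<times> 'a"
  obtain Z where Z: "Z \<in> null_sets lebesgue" "\<And>x. x \<notin> Z \<Longrightarrow> convex_on UNIV (\<lambda>t. F t x)"
    using F_convex unfolding eventually_ae_filter by auto
  have pointwise: "I (\<lambda>x. min (u x) (v x)) p + I (\<lambda>x. max (u x) (v x)) p \<le> I u p + I v p"
    if "fst p - snd p \<notin> Z" for p
  proof (cases "fst p = snd p")
    case False
    then have "F (min (u (fst p)) (v (fst p)) - min (u (snd p)) (v (snd p))) (fst p - snd p)
        + F (max (u (fst p)) (v (fst p)) - max (u (snd p)) (v (snd p))) (fst p - snd p)
        \<le> F (u (fst p) - u (snd p)) (fst p - snd p) + F (v (fst p) - v (snd p)) (fst p - snd p)"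
      using convex_on_min_max_diff_le Z(2) that by blast
    with False show ?thesis
      unfolding I_def using F_nonneg
      by (simp add: distrib_left[symmetric] mult_left_mono flip: ennreal_plus)
  qed (simp add: I_def)
  have "AE p in lebesgue. fst p - snd p \<notin> Z"
    using null_sets_lebesgue_diff_vimage[OF Z(1)] by (auto simp: eventually_ae_filter)
  then have "AE p in lebesgue. I (\<lambda>x. min (u x) (v x)) p + I (\<lambda>x. max (u x) (v x)) p \<le> I u p + I v p"
    by (rule eventually_mono) (rule pointwise)
  then show ?thesis
    unfolding interaction_energy_def I_def[abs_def]
    by (intro nn_integral_add_mono_AE interaction_integrand_measurable F_meas \<Omega> u v
        borel_measurable_min borel_measurable_max)
qed

lemma potential_energy_min_max_eq:
  assumes W: "W \<in> borel_measurable borel" and \<Omega>: "\<Omega> \<in> sets lebesgue"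
    and u: "u \<in> borel_measurable lebesgue" and v: "v \<in> borel_measurable lebesgue"
  shows "potential_energy W (\<lambda>x. min (u x) (v x)) \<Omega> + potential_energy W (\<lambda>x. max (u x) (v x)) \<Omega>
         = potential_energy W u \<Omega> + potential_energy W v \<Omega>"
proof -
  have measurable: "(\<lambda>x. indicator \<Omega> x * ennreal (W (w x))) \<in> borel_measurable lebesgue"
    if "w \<in> borel_measurable lebesgue" for w :: "'a \<Rightarrow> real"
    using measurable_compose[OF that W] \<Omega> by measurable
  have "indicator \<Omega> x * ennreal (W (min (u x) (v x))) + indicator \<Omega> x * ennreal (W (max (u x) (v x)))
      = indicator \<Omega> x * ennreal (W (u x)) + indicator \<Omega> x * ennreal (W (v x))" for x
    by (cases "u x \<le> v x") (simp_all add: min_def max_def add.commute)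
  then show ?thesis
    unfolding potential_energy_def
    by (simp add: nn_integral_add[symmetric] measurable u v borel_measurable_min borel_measurable_max)
qed

theorem lemma10:
  fixes F :: "real \<Rightarrow> 'a::euclidean_space \<Rightarrow> real"
    and W :: "real \<Rightarrow> real"
    and \<Omega> :: "'a set"
    and u v :: "'a \<Rightarrow> real"
  assumes F_meas: "(\<lambda>(t, x). F t x) \<in> borel_measurable borel"
    and F_nonneg: "\<And>t x. x \<noteq> 0 \<Longrightarrow> F t x \<ge> 0"
    and F_sym1: "\<And>t x. x \<noteq> 0 \<Longrightarrow> F t x = F (-t) x"
    and F_sym2: "\<And>t x. x \<noteq> 0 \<Longrightarrow> F (-t) x = F (-t) (-x)"
    and F_conv: "AE x in lebesgue. \<forall>l\<in>{0<..<1}. \<forall>t \<tau>.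
                   F (l * t + (1 - l) * \<tau>) x \<le> l * F t x + (1 - l) * F \<tau> x"
    and W_nonneg: "\<And>t. W t \<ge> 0"
    and W_Linf: "W \<in> borel_measurable lebesgue" "\<exists>C. AE t in lebesgue. \<bar>W t\<bar> \<le> C"
    and W_C1: "\<exists>W'. (\<forall>t. (W has_real_derivative W' t) (at t)) \<and> continuous_on UNIV W'"
    and \<Omega>_meas: "\<Omega> \<in> sets lebesgue"
    and u_meas: "u \<in> borel_measurable lebesgue"
    and v_meas: "v \<in> borel_measurable lebesgue"
  shows "energy F W (\<lambda>x. min (u x) (v x)) \<Omega> + energy F W (\<lambda>x. max (u x) (v x)) \<Omega>
         \<le> energy F W u \<Omega> + energy F W v \<Omega>"
proof -
  from F_conv have F_convex: "AE x in lebesgue. convex_on UNIV (\<lambda>t. F t x)"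
    by eventually_elim (rule convex_on_UNIV_realI)
  have interaction: "interaction_energy F (\<lambda>x. min (u x) (v x)) \<Omega>
      + interaction_energy F (\<lambda>x. max (u x) (v x)) \<Omega> \<le> interaction_energy F u \<Omega> + interaction_energy F v \<Omega>"
    using F_meas F_nonneg F_convex \<Omega>_meas u_meas v_meas by (rule interaction_energy_min_max_le)
  have "continuous_on UNIV W"
    using W_C1 by (metis DERIV_isCont continuous_at_imp_continuous_on)
  then have "W \<in> borel_measurable borel"
    by (rule borel_measurable_continuous_onI)
  from add_mono[OF interaction eq_refl[OF potential_energy_min_max_eq[OF this \<Omega>_meas u_meas v_meas]]]
  show ?thesis
    unfolding energy_eq_interaction_plus_potential by (simp add: ac_simps)
qed

end
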